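(* Let $m$ be even, $1\le r\le m$, and let $f\colon\mathbb{F}_2^m=\mathbb{F}_2^{m-r}\times\mathbb{F}_2^r\to\mathbb{F}_2$ be a bent function. For $\lambda\in\mathbb{F}_2^r$ define $f_\lambda\colon\mathbb{F}_2^{m-r}\to\mathbb{F}_2$ by $f_\lambda(t)=f(t,\lambda)$. Then every Walsh coefficient of $f_\lambda$ lies in the set $W_r=\{2^{m/2}-i\cdot 2^{m/2-r+1} : 0\le i\le 2^r\}$.
   Context: The Walsh coefficient of a Boolean function $g\colon\mathbb{F}_2^n\to\mathbb{F}_2$ at $a\in\mathbb{F}_2^n$ is $\widehat g(a)=\sum_{x\in\mathbb{F}_2^n}(-1)^{g(x)+a\cdot x}$, where $a\cdot x$ is the standard inner product. For $m$ even, $f\colon\mathbb{F}_2^m\to\mathbb{F}_2$ is bent if $\widehat f(a)\in\{\pm 2^{m/2}\}$ for all $a\in\mathbb{F}_2^m$ (equivalently, for all nonzero $a$ and all $b$, $f(x+a)+f(x)=b$ has $2^{m-1}$ solutions). *)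

theory Defs
  imports Complex_Main
begin

text \<open>Vectors of F_2^n are modelled as boolean lists of length n (True = 1).
  Addition in F_2 is exclusive or.\<close>

definition vecs :: "nat \<Rightarrow> bool list set" where
  "vecs n = {xs. length xs = n}"

definition dotp :: "bool list \<Rightarrow> bool list \<Rightarrow> bool" where
  "dotp a x = odd (card {i. i < length a \<and> i < length x \<and> a ! i \<and> x ! i})"

definition walsh :: "nat \<Rightarrow> (bool list \<Rightarrow> bool) \<Rightarrow> bool list \<Rightarrow> real" where
  "walsh n g a = (\<Sum>x\<in>vecs n. (-1::real) ^ (of_bool (g x) + of_bool (dotp a x)))"

definition bent :: "nat \<Rightarrow> (bool list \<Rightarrow> bool) \<Rightarrow> bool" where
  "bent m f \<longleftrightarrow> (\<forall>a\<in>vecs m. walsh m f a \<in> {2 ^ (m div 2), - (2 ^ (m div 2))})"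

text \<open>W_r = { 2^(m/2) - i 2^(m/2-r+1) : 0 <= i <= 2^r } (exponent may be negative).\<close>
definition W_set :: "nat \<Rightarrow> nat \<Rightarrow> real set" where
  "W_set m r = {2 ^ (m div 2) - real i * (2::real) powi (int (m div 2) - int r + 1) | i. i \<le> 2 ^ r}"

end

theory Submission
  imports Defs
begin

text \<open>Fourier inversion in the last \<open>r\<close> coordinates expresses \<open>2^r\<close> times a Walsh
  coefficient of \<open>f\<^sub>\<lambda>\<close> as a signed sum of \<open>2^r\<close> Walsh coefficients of \<open>f\<close>.
  When \<open>f\<close> is bent each of them is \<open>\<plusminus>2^(m/2)\<close>, so the sum equals \<open>2^(m/2) (2^r - 2i)\<close>,
  where \<open>i\<close> counts the negative terms.\<close>

definition bsign :: "bool \<Rightarrow> real" where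
  "bsign p = (if p then -1 else 1)"

lemma minus_one_power_of_bool_add:
  "(-1::real) ^ (of_bool p + of_bool q) = bsign p * bsign q"
  by (simp add: power_add bsign_def)

lemma bsign_xor: "bsign (p \<noteq> q) = bsign p * bsign q"
  by (simp add: bsign_def)

lemma dotp_Nil: "dotp [] [] = False"
  by (simp add: dotp_def)

lemma dotp_Cons: "dotp (x # a) (y # t) = ((x \<and> y) \<noteq> dotp a t)"
proof -
  let ?S = "{i. i < length a \<and> i < length t \<and> a ! i \<and> t ! i}"
  have fin: "finite ?S"
    by (rule finite_subset[of _ "{..<length a}"]) auto
  have shift: "{i. i < length (x # a) \<and> i < length (y # t) \<and> (x # a) ! i \<and> (y # t) ! i}
      = (if x \<and> y then {0} else {}) \<union> Suc ` ?S" (is "?L = ?R")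
  proof (rule set_eqI)
    show "i \<in> ?L \<longleftrightarrow> i \<in> ?R" for i
      by (cases i) auto
  qed
  have "card (Suc ` ?S) = card ?S"
    by (simp add: card_image)
  with fin show ?thesis
    unfolding dotp_def shift by (cases "x \<and> y") auto
qed
lemma dotp_append:
  "length a = length t \<Longrightarrow> dotp (a @ b) (t @ s) = (dotp a t \<noteq> dotp b s)"
proof (induction a arbitrary: t)
  case Nil
  then show ?case by (simp add: dotp_Nil)
next
  case (Cons x a)
  then obtain y t' where "t = y # t'" "length a = length t'"
    by (cases t) auto
  with Cons show ?case by (auto simp: dotp_Cons)
qed

lemma vecs_0: "vecs 0 = {[]}"
  by (auto simp: vecs_def)

lemma vecs_Suc: "vecs (Suc n) = (\<lambda>(x, b). x # b) ` (UNIV \<times> vecs n)"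
  by (auto simp: vecs_def length_Suc_conv image_iff)

lemma inj_on_Cons_pair: "inj_on (\<lambda>(x, b). x # b) A"
  by (auto simp: inj_on_def)

lemma finite_vecs: "finite (vecs n)"
  by (induction n) (auto simp: vecs_0 vecs_Suc)

lemma card_vecs: "card (vecs n) = 2 ^ n"
  by (induction n) (auto simp: vecs_0 vecs_Suc card_image[OF inj_on_Cons_pair] card_cartesian_product)

lemma sum_vecs_Suc: "(\<Sum>v\<in>vecs (Suc n). g v) = (\<Sum>x\<in>UNIV. \<Sum>b\<in>vecs n. g (x # b))"
  unfolding vecs_Suc
  by (simp add: sum.reindex[OF inj_on_Cons_pair] sum.cartesian_product prod.case_distrib)

lemma vecs_add: "vecs (n + k) = (\<lambda>(t, s). t @ s) ` (vecs n \<times> vecs k)"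
proof (rule set_eqI)
  fix xs
  show "xs \<in> vecs (n + k) \<longleftrightarrow> xs \<in> (\<lambda>(t, s). t @ s) ` (vecs n \<times> vecs k)"
  proof
    assume "xs \<in> vecs (n + k)"
    then have "(take n xs, drop n xs) \<in> vecs n \<times> vecs k"
      by (auto simp: vecs_def)
    then show "xs \<in> (\<lambda>(t, s). t @ s) ` (vecs n \<times> vecs k)"
      by (rule rev_image_eqI) simp
  qed (auto simp: vecs_def)
qed

lemma inj_on_append_pair: "inj_on (\<lambda>(t, s). t @ s) (vecs n \<times> vecs k)"
  by (auto simp: inj_on_def vecs_def)

lemma sum_vecs_add: "(\<Sum>v\<in>vecs (n + k). g v) = (\<Sum>t\<in>vecs n. \<Sum>s\<in>vecs k. g (t @ s))"
  unfolding vecs_add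
  by (simp add: sum.reindex[OF inj_on_append_pair] sum.cartesian_product prod.case_distrib)

lemma sum_vecs_character_orthogonality:
  assumes "s \<in> vecs r" and "l \<in> vecs r"
  shows "(\<Sum>b\<in>vecs r. bsign (dotp b s) * bsign (dotp b l)) = (if s = l then 2 ^ r else 0)"
  using assms
proof (induction r arbitrary: s l)
  case 0
  then show ?case by (simp add: vecs_0 dotp_Nil bsign_def)
next
  case (Suc r)
  then obtain y s' z l' where sl: "s = y # s'" "l = z # l'" "s' \<in> vecs r" "l' \<in> vecs r"
    by (auto simp: vecs_def length_Suc_conv)
  have "(\<Sum>b\<in>vecs (Suc r). bsign (dotp b s) * bsign (dotp b l))
      = (\<Sum>x\<in>UNIV. bsign (x \<and> y) * bsign (x \<and> z) *
           (\<Sum>b\<in>vecs r. bsign (dotp b s') * bsign (dotp b l')))"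
    unfolding sum_vecs_Suc sl(1,2) dotp_Cons bsign_xor
    by (simp add: sum_distrib_left mult_ac)
  also have "\<dots> = (if y = z then 2 else 0) * (if s' = l' then 2 ^ r else 0)"
    using Suc.IH[OF sl(3,4)] by (simp add: UNIV_bool bsign_def)
  finally show ?case
    using sl by simp
qed

lemma walsh_append:
  assumes "length a = n"
  shows "walsh (n + r) f (a @ b)
    = (\<Sum>s\<in>vecs r. bsign (dotp b s) * walsh n (\<lambda>t. f (t @ s)) a)"
proof -
  have "walsh (n + r) f (a @ b)
      = (\<Sum>t\<in>vecs n. \<Sum>s\<in>vecs r. bsign (f (t @ s)) * bsign (dotp (a @ b) (t @ s)))"
    unfolding walsh_def minus_one_power_of_bool_add sum_vecs_add ..
  also have "\<dots> = (\<Sum>t\<in>vecs n. \<Sum>s\<in>vecs r.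
      bsign (dotp b s) * (bsign (f (t @ s)) * bsign (dotp a t)))"
    using assms by (intro sum.cong refl) (simp add: vecs_def dotp_append bsign_def)
  also have "\<dots> = (\<Sum>s\<in>vecs r. bsign (dotp b s) * walsh n (\<lambda>t. f (t @ s)) a)"
    unfolding walsh_def minus_one_power_of_bool_add
    by (subst sum.swap) (simp add: sum_distrib_left)
  finally show ?thesis .
qed

lemma walsh_restriction_inversion:
  assumes "length a = n" and "lam \<in> vecs r"
  shows "(\<Sum>b\<in>vecs r. bsign (dotp b lam) * walsh (n + r) f (a @ b))
    = 2 ^ r * walsh n (\<lambda>t. f (t @ lam)) a"
proof -
  have "(\<Sum>b\<in>vecs r. bsign (dotp b lam) * walsh (n + r) f (a @ b))
      = (\<Sum>s\<in>vecs r. walsh n (\<lambda>t. f (t @ s)) a *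
           (\<Sum>b\<in>vecs r. bsign (dotp b s) * bsign (dotp b lam)))"
    unfolding walsh_append[OF assms(1)] sum_distrib_left
    by (subst sum.swap) (simp add: mult_ac)
  also have "\<dots> = (\<Sum>s\<in>vecs r. if s = lam then 2 ^ r * walsh n (\<lambda>t. f (t @ s)) a else 0)"
    using assms(2) by (intro sum.cong refl) (simp add: sum_vecs_character_orthogonality)
  also have "\<dots> = 2 ^ r * walsh n (\<lambda>t. f (t @ lam)) a"
    using assms(2) finite_vecs by (simp add: sum.delta')
  finally show ?thesis .
qed

lemma sum_plus_minus_const:
  fixes g :: "'a \<Rightarrow> real"
  assumes "finite A" and "\<And>x. x \<in> A \<Longrightarrow> g x \<in> {c, -c}"
  shows "\<exists>i\<le>card A. sum g A = c * (real (card A) - 2 * real i)"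
proof -
  let ?N = "{x\<in>A. g x \<noteq> c}"
  have "sum g A = sum g (A - ?N) + sum g ?N"
    using assms(1) by (intro sum.subset_diff) auto
  also have "\<dots> = (\<Sum>x\<in>A - ?N. c) + (\<Sum>x\<in>?N. -c)"
    using assms(2) by (intro arg_cong2[where f = "(+)"] sum.cong) auto
  also have "\<dots> = c * (real (card A) - 2 * real (card ?N))"
    using assms(1) by (simp add: card_Diff_subset card_mono of_nat_diff algebra_simps)
  finally show ?thesis
    using assms(1) by (intro exI[of _ "card ?N"]) (simp add: card_mono)
qed

lemma power_int_of_nat_diff_plus_one:
  fixes x :: "'a::field"
  assumes "x \<noteq> 0"
  shows "x powi (int h - int r + 1) = x ^ (h + 1) / x ^ r"
proof -
  have "x powi (int h - int r + 1) = x powi (int (h + 1) - int r)"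
    by (simp add: algebra_simps)
  also have "\<dots> = x powi int (h + 1) / x powi int r"
    by (rule power_int_diff) (use assms in simp)
  also have "\<dots> = x ^ (h + 1) / x ^ r"
    by (simp only: power_int_of_nat)
  finally show ?thesis .
qed

lemma W_setI:
  assumes "i \<le> 2 ^ r" and "2 ^ r * w = 2 ^ (m div 2) * (2 ^ r - 2 * real i)"
  shows "w \<in> W_set m r"
proof -
  have "w = 2 ^ (m div 2) - real i * (2 ^ (m div 2 + 1) / 2 ^ r)"
    using assms(2) by (simp add: field_simps)
  moreover have "(2::real) powi (int (m div 2) - int r + 1) = 2 ^ (m div 2 + 1) / 2 ^ r"
    by (rule power_int_of_nat_diff_plus_one) simp
  ultimately show ?thesis
    unfolding W_set_def using assms(1) by auto
qed

theorem mainTheorem7: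
  fixes m r :: nat and f :: "bool list \<Rightarrow> bool" and lam a :: "bool list"
  assumes "even m" and "1 \<le> r" and "r \<le> m"
    and "bent m f"
    and "lam \<in> vecs r"
    and "a \<in> vecs (m - r)"
  shows "walsh (m - r) (\<lambda>t. f (t @ lam)) a \<in> W_set m r"
proof -
  let ?n = "m - r" and ?c = "(2::real) ^ (m div 2)"
  let ?g = "\<lambda>b. bsign (dotp b lam) * walsh m f (a @ b)"
  have m: "m = ?n + r" and a: "length a = ?n"
    using assms(3,6) by (simp_all add: vecs_def)
  have "?g b \<in> {?c, -?c}" if "b \<in> vecs r" for b
  proof -
    have "a @ b \<in> vecs m"
      using that a m by (simp add: vecs_def)
    then show ?thesis
      using assms(4) by (auto simp: bent_def bsign_def)
  qed
  from sum_plus_minus_const[of "vecs r" ?g, OF finite_vecs this]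
  obtain i where i: "i \<le> 2 ^ r" and sum: "sum ?g (vecs r) = ?c * (2 ^ r - 2 * real i)"
    unfolding card_vecs by auto
  have "2 ^ r * walsh ?n (\<lambda>t. f (t @ lam)) a = ?c * (2 ^ r - 2 * real i)"
    using walsh_restriction_inversion[OF a assms(5), of f] sum m by simp
  with i show ?thesis
    by (rule W_setI)
qed

end
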